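(* Fix an integer $\Delta\geq 2$. There exists $N$ (depending on $\Delta$) such that for every $2$-connected finite simple graph $G$ on $n\geq N$ vertices with maximum degree $\Delta$, the polynomial $\mathrm{nRel}(G;p)$ has at least two fixed points in $(0,1)$, i.e. at least two distinct $p\in(0,1)$ with $\mathrm{nRel}(G;p)=p$.
   Context: For a graph $G$ on $n$ vertices, a connected set is a nonempty vertex subset $C$ such that the induced subgraph $G[C]$ is connected. The node reliability of $G$ is the polynomial \[ \mathrm{nRel}(G;p)=\sum_{C}p^{|C|}(1-p)^{n-|C|}, \] the sum over all connected sets $C$ of $G$. *)

theory Defs
  imports Complex_Main
begin

definition simple_graph :: "'a set \<Rightarrow> ('a \<Rightarrow> 'a \<Rightarrow> bool) \<Rightarrow> bool" where
  "simple_graph V E \<longleftrightarrow> finite V \<and> (\<forall>u v. E u v \<longrightarrow> E v u)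
     \<and> (\<forall>v. \<not> E v v) \<and> (\<forall>u v. E u v \<longrightarrow> u \<in> V \<and> v \<in> V)"

definition induced_connected :: "('a \<Rightarrow> 'a \<Rightarrow> bool) \<Rightarrow> 'a set \<Rightarrow> bool" where
  "induced_connected E C \<longleftrightarrow> C \<noteq> {} \<and>
     (\<forall>u\<in>C. \<forall>v\<in>C. (\<lambda>x y. x \<in> C \<and> y \<in> C \<and> E x y)\<^sup>*\<^sup>* u v)"

definition connected_set :: "'a set \<Rightarrow> ('a \<Rightarrow> 'a \<Rightarrow> bool) \<Rightarrow> 'a set \<Rightarrow> bool" where
  "connected_set V E C \<longleftrightarrow> C \<subseteq> V \<and> induced_connected E C"

definition nRel :: "'a set \<Rightarrow> ('a \<Rightarrow> 'a \<Rightarrow> bool) \<Rightarrow> real \<Rightarrow> real" where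
  "nRel V E p = (\<Sum>C\<in>{C. connected_set V E C}. p ^ card C * (1 - p) ^ (card V - card C))"

definition degree :: "'a set \<Rightarrow> ('a \<Rightarrow> 'a \<Rightarrow> bool) \<Rightarrow> 'a \<Rightarrow> nat" where
  "degree V E v = card {u\<in>V. E v u}"

definition max_degree :: "'a set \<Rightarrow> ('a \<Rightarrow> 'a \<Rightarrow> bool) \<Rightarrow> nat" where
  "max_degree V E = Max (degree V E ` V)"

definition two_connected :: "'a set \<Rightarrow> ('a \<Rightarrow> 'a \<Rightarrow> bool) \<Rightarrow> bool" where
  "two_connected V E \<longleftrightarrow> card V \<ge> 3 \<and> induced_connected E V \<and>
     (\<forall>v\<in>V. induced_connected E (V - {v}))"

end

theory Submission
  imports Defs
begin

text \<open>
  Near \<open>p = 0\<close> the singletons alone give \<open>nRel(G;p) \<ge> n p (1-p)\<^sup>n\<^sup>-\<^sup>1 > p\<close>, and near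
  \<open>p = 1\<close> the connected sets \<open>V\<close> and \<open>V - {v}\<close> (2-connectedness) give
  \<open>nRel(G;p) \<ge> p\<^sup>n + n p\<^sup>n\<^sup>-\<^sup>1 (1-p) > p\<close>. At \<open>p = 1/2\<close>, \<open>nRel\<close> is the number of connected
  sets divided by \<open>2\<^sup>n\<close>. With closed neighbourhoods of size at most \<open>D = \<Delta> + 1\<close>, a greedy
  choice yields a set \<open>I\<close> of at least \<open>n/D\<^sup>2\<close> vertices with pairwise disjoint closed
  neighbourhoods. A connected set that is not a singleton has no isolated vertex, and
  among all subsets of \<open>V\<close> at most a fraction \<open>(1 - 2\<^sup>-\<^sup>D)\<^bsup>|I|\<^esup>\<close> leaves no vertex of
  \<open>I\<close> isolated, as these events are independent. Hence \<open>nRel(G;1/2) < 1/2\<close> for large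
  \<open>n\<close>, and the intermediate value theorem yields a fixed point on each side of \<open>1/2\<close>.
\<close>

definition closed_nbhd :: "'a set \<Rightarrow> ('a \<Rightarrow> 'a \<Rightarrow> bool) \<Rightarrow> 'a \<Rightarrow> 'a set" where
  "closed_nbhd V E x = insert x {u\<in>V. E x u}"

text \<open>\<open>C \<inter> N[v] = {v}\<close> says that \<open>v\<close> is an isolated vertex of \<open>G[C]\<close>.\<close>
definition isolation_free :: "'a set \<Rightarrow> ('a \<Rightarrow> 'a \<Rightarrow> bool) \<Rightarrow> 'a set \<Rightarrow> 'a set set" where
  "isolation_free V E I = {C. C \<subseteq> V \<and> (\<forall>v\<in>I. C \<inter> closed_nbhd V E v \<noteq> {v})}"

lemma closed_nbhd_subset: "x \<in> V \<Longrightarrow> closed_nbhd V E x \<subseteq> V"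
  by (auto simp: closed_nbhd_def)

lemma finite_closed_nbhd: "finite V \<Longrightarrow> finite (closed_nbhd V E x)"
  by (simp add: closed_nbhd_def)

lemma card_closed_nbhd_le_max_degree:
  assumes "finite V" and "x \<in> V"
  shows "card (closed_nbhd V E x) \<le> Suc (max_degree V E)"
proof -
  have "card (closed_nbhd V E x) \<le> Suc (degree V E x)"
    using assms by (simp add: closed_nbhd_def degree_def card_insert_if)
  also have "degree V E x \<le> max_degree V E"
    using assms by (simp add: max_degree_def)
  finally show ?thesis by simp
qed

lemma finite_isolation_free: "finite V \<Longrightarrow> finite (isolation_free V E I)"
  by (rule finite_subset[of _ "Pow V"]) (auto simp: isolation_free_def)

lemma card_isolation_free_insert:
  assumes fin: "finite V" and vV: "v \<in> V"
    and disj: "\<forall>w\<in>I. closed_nbhd V E v \<inter> closed_nbhd V E w = {}"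
    and nbhd_le: "card (closed_nbhd V E v) \<le> D"
  shows "real (card (isolation_free V E (insert v I)))
           \<le> (1 - 1/2^D) * real (card (isolation_free V E I))"
proof -
  let ?N = "closed_nbhd V E v" and ?S = "isolation_free V E I"
  define T where "T = {C\<in>?S. C \<inter> ?N = {v}}"
  have vN: "v \<in> ?N" by (simp add: closed_nbhd_def)
  have finS: "finite ?S" using fin by (rule finite_isolation_free)
  have finN: "finite ?N" using fin by (rule finite_closed_nbhd)
  have TS: "T \<subseteq> ?S" by (auto simp: T_def)
  have finT: "finite T" using finS TS finite_subset by blast
  txt \<open>Changing \<open>C\<close> only inside \<open>N[v]\<close> does not affect the other constraints, so
    \<open>C \<mapsto> ((C - N[v]) \<union> {v}, C \<inter> N[v])\<close> embeds \<open>?S\<close> into \<open>T \<times> Pow N[v]\<close>.\<close>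
  define h where "h C = ((C - ?N) \<union> {v}, C \<inter> ?N)" for C
  have "inj_on h ?S"
  proof (rule inj_onI)
    fix C1 C2 assume "h C1 = h C2"
    hence "C1 - ?N = C2 - ?N" and "C1 \<inter> ?N = C2 \<inter> ?N"
      using vN by (auto simp: h_def)
    thus "C1 = C2" by blast
  qed
  moreover have "h ` ?S \<subseteq> T \<times> Pow ?N"
  proof (rule image_subsetI)
    fix C assume C: "C \<in> ?S"
    have "((C - ?N) \<union> {v}) \<inter> closed_nbhd V E w \<noteq> {w}" if "w \<in> I" for w
    proof -
      have "((C - ?N) \<union> {v}) \<inter> closed_nbhd V E w = C \<inter> closed_nbhd V E w"
        using disj that vN by blast
      thus ?thesis using C that by (simp add: isolation_free_def)
    qed
    moreover have "(C - ?N) \<union> {v} \<subseteq> V" using C vV by (auto simp: isolation_free_def)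
    moreover have "((C - ?N) \<union> {v}) \<inter> ?N = {v}" using vN by blast
    ultimately have "(C - ?N) \<union> {v} \<in> T" using C by (simp add: T_def isolation_free_def)
    thus "h C \<in> T \<times> Pow ?N" by (simp add: h_def)
  qed
  ultimately have "card ?S \<le> card (T \<times> Pow ?N)"
    using finT finN by (intro card_inj_on_le) auto
  also have "\<dots> = card T * 2 ^ card ?N"
    using finT finN by (simp add: card_cartesian_product card_Pow)
  also have "\<dots> \<le> card T * 2 ^ D"
    using nbhd_le by (intro mult_left_mono power_increasing) auto
  finally have "real (card ?S) \<le> real (card T) * 2 ^ D"
    by (metis of_nat_le_iff of_nat_mult of_nat_numeral of_nat_power)
  hence "real (card ?S) / 2 ^ D \<le> real (card T)"
    by (simp add: divide_le_eq)
  moreover have "isolation_free V E (insert v I) = ?S - T"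
    by (auto simp: isolation_free_def T_def)
  hence "real (card (isolation_free V E (insert v I))) = real (card ?S) - real (card T)"
    using TS finT card_mono[OF finS TS] by (simp add: card_Diff_subset of_nat_diff)
  ultimately show ?thesis by (simp add: algebra_simps)
qed

lemma card_isolation_free_le:
  assumes fin: "finite V" and "finite I" and "I \<subseteq> V"
    and nbhd_le: "\<forall>x\<in>V. card (closed_nbhd V E x) \<le> D"
    and disj: "\<forall>u\<in>I. \<forall>w\<in>I. u \<noteq> w \<longrightarrow> closed_nbhd V E u \<inter> closed_nbhd V E w = {}"
  shows "real (card (isolation_free V E I)) \<le> 2 ^ card V * (1 - 1/2^D) ^ card I"
  using assms(2-3) disj
proof (induction I rule: finite_induct)
  case empty
  have "isolation_free V E {} = Pow V" by (auto simp: isolation_free_def)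
  thus ?case using fin by (simp add: card_Pow)
next
  case (insert v I)
  have "real (card (isolation_free V E (insert v I)))
          \<le> (1 - 1/2^D) * real (card (isolation_free V E I))"
    using insert nbhd_le by (intro card_isolation_free_insert[OF fin]) auto
  also have "\<dots> \<le> (1 - 1/2^D) * (2 ^ card V * (1 - 1/2^D) ^ card I)"
    using insert by (intro mult_left_mono) auto
  finally show ?case using insert by (simp add: algebra_simps)
qed

lemma mem_closed_nbhd_sym:
  assumes "\<forall>u v. E u v \<longrightarrow> E v u" and "x \<in> V" and "y \<in> closed_nbhd V E x"
  shows "x \<in> closed_nbhd V E y"
  using assms by (auto simp: closed_nbhd_def)

lemma exists_closed_nbhd_packing:
  assumes fin: "finite V" and sym: "\<forall>u v. E u v \<longrightarrow> E v u"
    and nbhd_le: "\<forall>x\<in>V. card (closed_nbhd V E x) \<le> D"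
    and "W \<subseteq> V"
  shows "\<exists>I \<subseteq> W. (\<forall>u\<in>I. \<forall>w\<in>I. u \<noteq> w \<longrightarrow> closed_nbhd V E u \<inter> closed_nbhd V E w = {})
           \<and> card W \<le> D * D * card I"
  using \<open>W \<subseteq> V\<close>
proof (induction "card W" arbitrary: W rule: less_induct)
  case less
  show ?case
  proof (cases "W = {}")
    case True thus ?thesis by auto
  next
    case False
    then obtain w where wW: "w \<in> W" by auto
    have finW: "finite W" using less.prems fin finite_subset by blast
    have wV: "w \<in> V" using wW less.prems by auto
    txt \<open>Pick \<open>w\<close> greedily and discard the vertices whose closed neighbourhood meets
      that of \<open>w\<close>; they lie within distance two of \<open>w\<close>.\<close>
    define R where "R = {x\<in>W. closed_nbhd V E x \<inter> closed_nbhd V E w \<noteq> {}}"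
    have wR: "w \<in> R" by (auto simp: R_def closed_nbhd_def wW)
    have RW: "R \<subseteq> W" by (auto simp: R_def)
    have lt: "card (W - R) < card W"
      using wR wW finW by (intro psubset_card_mono) auto
    obtain I' where I': "I' \<subseteq> W - R"
      "\<forall>u\<in>I'. \<forall>w\<in>I'. u \<noteq> w \<longrightarrow> closed_nbhd V E u \<inter> closed_nbhd V E w = {}"
      "card (W - R) \<le> D * D * card I'"
      using less.hyps[OF lt] less.prems by blast
    have "R \<subseteq> (\<Union>y\<in>closed_nbhd V E w. closed_nbhd V E y)"
    proof
      fix x assume "x \<in> R"
      then obtain y where "y \<in> closed_nbhd V E x" "y \<in> closed_nbhd V E w" and "x \<in> V"
        using less.prems by (auto simp: R_def)
      thus "x \<in> (\<Union>y\<in>closed_nbhd V E w. closed_nbhd V E y)"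
        using mem_closed_nbhd_sym[OF sym] by blast
    qed
    hence "card R \<le> card (\<Union>y\<in>closed_nbhd V E w. closed_nbhd V E y)"
      using fin by (intro card_mono) (simp_all add: finite_closed_nbhd)
    also have "\<dots> \<le> (\<Sum>y\<in>closed_nbhd V E w. card (closed_nbhd V E y))"
      using fin by (intro card_UN_le finite_closed_nbhd)
    also have "\<dots> \<le> card (closed_nbhd V E w) * D"
      using sum_bounded_above[of "closed_nbhd V E w" "\<lambda>y. card (closed_nbhd V E y)" D]
        nbhd_le closed_nbhd_subset[OF wV] by auto
    also have "\<dots> \<le> D * D" using nbhd_le wV by simp
    finally have "card R \<le> D * D" .
    moreover have "card W \<le> card (W - R) + card R"
      using RW finW by (simp add: card_Diff_subset card_mono finite_subset)
    moreover have "w \<notin> I'" and "finite I'" using I'(1) wR finW finite_subset by auto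
    moreover have "\<forall>u\<in>I'. closed_nbhd V E w \<inter> closed_nbhd V E u = {}"
      using I'(1) by (auto simp: R_def)
    ultimately show ?thesis
      using I' wW by (intro exI[of _ "insert w I'"]) auto
  qed
qed

lemma connected_set_isolated_vertex:
  assumes "simple_graph V E" and "connected_set V E C"
    and isolated: "C \<inter> closed_nbhd V E v = {v}"
  shows "C = {v}"
proof -
  let ?R = "\<lambda>x y. x \<in> C \<and> y \<in> C \<and> E x y"
  have vC: "v \<in> C" using isolated by blast
  have "u = v" if "u \<in> C" for u
  proof -
    have "?R\<^sup>*\<^sup>* v u"
      using assms(2) vC that by (simp add: connected_set_def induced_connected_def)
    thus "u = v"
    proof (rule converse_rtranclpE)
      fix x assume "?R v x"
      hence "x \<in> C \<inter> closed_nbhd V E v"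
        using assms(1) by (auto simp: closed_nbhd_def simple_graph_def)
      hence "x = v" using isolated by blast
      with \<open>?R v x\<close> show "u = v" using assms(1) by (simp add: simple_graph_def)
    qed simp
  qed
  thus ?thesis using vC by blast
qed

lemma card_connected_sets_le:
  assumes "simple_graph V E" and "I \<subseteq> V"
  shows "card {C. connected_set V E C} \<le> card V + card (isolation_free V E I)"
proof -
  have fin: "finite V" using assms(1) by (simp add: simple_graph_def)
  have "{C. connected_set V E C} \<subseteq> (\<lambda>v. {v}) ` V \<union> isolation_free V E I"
  proof clarify
    fix C assume cs: "connected_set V E C" and "C \<notin> isolation_free V E I"
    then obtain v where "v \<in> I" "C \<inter> closed_nbhd V E v = {v}"
      by (auto simp: isolation_free_def connected_set_def)
    moreover have "C = {v}"
      using connected_set_isolated_vertex[OF assms(1) cs] calculation by blast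
    ultimately show "C \<in> (\<lambda>v. {v}) ` V" using assms(2) by blast
  qed
  hence "card {C. connected_set V E C} \<le> card ((\<lambda>v. {v}) ` V \<union> isolation_free V E I)"
    using fin by (intro card_mono) (auto simp: finite_isolation_free)
  also have "\<dots> \<le> card ((\<lambda>v. {v}) ` V) + card (isolation_free V E I)"
    by (rule card_Un_le)
  also have "\<dots> \<le> card V + card (isolation_free V E I)"
    using card_image_le[OF fin] by simp
  finally show ?thesis .
qed

lemma finite_connected_sets: "finite V \<Longrightarrow> finite {C. connected_set V E C}"
  by (rule finite_subset[of _ "Pow V"]) (auto simp: connected_set_def)

lemma nRel_half:
  assumes "finite V"
  shows "nRel V E (1/2) = real (card {C. connected_set V E C}) / 2 ^ card V"
proof -
  have "(1/2::real) ^ card C * (1 - 1/2) ^ (card V - card C) = 1 / 2 ^ card V"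
    if "connected_set V E C" for C
  proof -
    have "card C \<le> card V" using that assms by (simp add: connected_set_def card_mono)
    thus ?thesis by (simp add: power_divide flip: power_add)
  qed
  thus ?thesis by (simp add: nRel_def)
qed

lemma four_mult_le_two_power: "4 \<le> n \<Longrightarrow> 4 * n \<le> (2::nat) ^ n"
  by (induction n rule: dec_induct) simp_all

lemma nRel_half_less_half:
  assumes sg: "simple_graph V E"
    and nbhd_le: "\<forall>x\<in>V. card (closed_nbhd V E x) \<le> D"
    and M: "(1 - 1/2^D) ^ M < (1/4 :: real)"
    and large: "max 4 (D * D * M) \<le> card V"
  shows "nRel V E (1/2) < 1/2"
proof -
  let ?n = "card V"
  have fin: "finite V" and sym: "\<forall>u v. E u v \<longrightarrow> E v u"
    using sg by (simp_all add: simple_graph_def)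
  obtain I where I: "I \<subseteq> V"
    "\<forall>u\<in>I. \<forall>w\<in>I. u \<noteq> w \<longrightarrow> closed_nbhd V E u \<inter> closed_nbhd V E w = {}"
    "?n \<le> D * D * card I"
    using exists_closed_nbhd_packing[OF fin sym nbhd_le subset_refl] by blast
  have "0 < D" using large I(3) by (cases D) auto
  moreover have "D * D * M \<le> D * D * card I" using large I(3) by (metis le_trans max.bounded_iff)
  ultimately have "M \<le> card I" by simp
  have "real (card (isolation_free V E I)) \<le> 2 ^ ?n * (1 - 1/2^D) ^ card I"
    using I fin finite_subset nbhd_le by (intro card_isolation_free_le) auto
  also have "\<dots> \<le> 2 ^ ?n * (1 - 1/2^D) ^ M"
    using \<open>M \<le> card I\<close> by (intro mult_left_mono power_decreasing) auto
  also have "\<dots> < 2 ^ ?n * (1/4)"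
    using M by (intro mult_strict_left_mono) auto
  finally have "real (card (isolation_free V E I)) < 2 ^ ?n / 4" by simp
  moreover have "4 * real ?n \<le> 2 ^ ?n"
    using of_nat_mono[OF four_mult_le_two_power[of ?n]] large by simp
  moreover have "real (card {C. connected_set V E C}) \<le> real ?n + real (card (isolation_free V E I))"
    using card_connected_sets_le[OF sg I(1)] by (metis of_nat_add of_nat_le_iff)
  ultimately have "real (card {C. connected_set V E C}) < 2 ^ ?n / 2" by simp
  thus ?thesis by (simp add: nRel_half[OF fin] divide_less_eq)
qed

lemma nRel_ge_singletons:
  assumes "finite V" and "0 \<le> p" "p \<le> 1"
  shows "real (card V) * p * (1 - p) ^ (card V - 1) \<le> nRel V E p"
proof -
  let ?f = "\<lambda>C. p ^ card C * (1 - p) ^ (card V - card C)"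
  have "(\<Sum>v\<in>V. ?f {v}) = (\<Sum>C\<in>(\<lambda>v. {v}) ` V. ?f C)"
    by (subst sum.reindex) (auto simp: inj_on_def)
  also have "\<dots> \<le> (\<Sum>C\<in>{C. connected_set V E C}. ?f C)"
    using assms by (intro sum_mono2 finite_connected_sets)
      (auto simp: connected_set_def induced_connected_def)
  finally show ?thesis by (simp add: nRel_def)
qed

lemma nRel_ge_whole_and_vertex_deleted:
  assumes "finite V" and "0 \<le> p" "p \<le> 1" and tc: "two_connected V E"
  shows "p ^ card V + real (card V) * p ^ (card V - 1) * (1 - p) \<le> nRel V E p"
proof -
  let ?f = "\<lambda>C. p ^ card C * (1 - p) ^ (card V - card C)"
  have n3: "card V \<ge> 3" using tc by (simp add: two_connected_def)
  have "(\<Sum>v\<in>V. ?f (V - {v})) = (\<Sum>v\<in>V. p ^ (card V - 1) * (1 - p))"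
    using assms(1) n3 by (intro sum.cong) (simp_all add: card_Diff_singleton)
  hence "p ^ card V + real (card V) * p ^ (card V - 1) * (1 - p)
           = ?f V + (\<Sum>C\<in>(\<lambda>v. V - {v}) ` V. ?f C)"
    by (subst sum.reindex) (auto simp: inj_on_def)
  also have "\<dots> = (\<Sum>C\<in>insert V ((\<lambda>v. V - {v}) ` V). ?f C)"
    using assms(1) by (subst sum.insert) auto
  also have "\<dots> \<le> (\<Sum>C\<in>{C. connected_set V E C}. ?f C)"
    using assms by (intro sum_mono2 finite_connected_sets)
      (auto simp: two_connected_def connected_set_def)
  finally show ?thesis by (simp add: nRel_def)
qed

lemma nRel_gt_self_near_0:
  assumes "finite V" and n: "card V \<ge> 3"
  defines "p \<equiv> 1 / (2 * real (card V))"
  shows "p < nRel V E p"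
proof -
  let ?n = "card V"
  have p: "0 < p" "p \<le> 1" using n by (auto simp: p_def field_simps)
  have "1 + real (?n - 1) * (-p) \<le> (1 + (-p)) ^ (?n - 1)"
    using p by (intro Bernoulli_inequality) auto
  moreover have "real (?n - 1) * p \<le> 1/2" using n by (simp add: p_def field_simps)
  ultimately have "1/2 \<le> (1 - p) ^ (?n - 1)" by simp
  hence "real ?n * (1/2) \<le> real ?n * (1 - p) ^ (?n - 1)" by (intro mult_left_mono) auto
  moreover have "1 < real ?n * (1/2)" using n by simp
  ultimately have "1 < real ?n * (1 - p) ^ (?n - 1)" by linarith
  hence "p < real ?n * p * (1 - p) ^ (?n - 1)"
    using p mult_strict_left_mono[of 1 _ p] by (simp add: algebra_simps)
  also have "\<dots> \<le> nRel V E p" using assms p by (intro nRel_ge_singletons) auto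
  finally show ?thesis .
qed

lemma nRel_gt_self_near_1:
  assumes "finite V" and tc: "two_connected V E"
  defines "p \<equiv> 1 - 1 / (2 * real (card V) ^ 2)"
  shows "p < nRel V E p"
proof -
  let ?n = "card V"
  define q where "q = 1 / (2 * real ?n ^ 2)"
  define m where "m = real ?n - 1"
  define a where "a = p ^ (?n - 1)"
  have n: "?n \<ge> 3" using tc by (simp add: two_connected_def)
  have "(1::real) \<le> real ?n ^ 2" using n by (intro one_le_power) simp
  hence "1 \<le> 2 * real ?n ^ 2" by linarith
  hence q: "0 < q" "q \<le> 1" using n by (auto simp: q_def)
  have pq: "p = 1 - q" by (simp add: p_def q_def)
  have m: "0 \<le> m" "real (?n - 1) = m" using n by (simp_all add: m_def of_nat_diff)
  have "1 + m * (-q) \<le> (1 + (-q)) ^ (?n - 1)"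
    using q m by (metis Bernoulli_inequality neg_le_iff_le)
  hence a: "1 - m * q \<le> a" by (simp add: a_def pq)
  txt \<open>\<open>p\<^sup>n + n p\<^sup>n\<^sup>-\<^sup>1 q = a (1 + m q) \<ge> 1 - m\<^sup>2 q\<^sup>2\<close>, and \<open>m\<^sup>2 q < 1\<close> by the choice of \<open>q\<close>.\<close>
  have "p ^ ?n = p * a" using n by (simp add: a_def flip: power_Suc)
  hence "p ^ ?n + real ?n * a * q = a * (1 + m * q)"
    by (simp add: pq m_def algebra_simps)
  also have "\<dots> \<ge> (1 - m * q) * (1 + m * q)"
    using a q m by (intro mult_right_mono) auto
  finally have ge: "1 - (m * q) * (m * q) \<le> p ^ ?n + real ?n * a * q"
    by (simp add: algebra_simps)
  have "m * m \<le> real ?n * real ?n" using m by (intro mult_mono) (auto simp: m_def)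
  also have "\<dots> < 2 * real ?n ^ 2" using n by (simp add: power2_eq_square)
  finally have "m * m * q < 1" using n by (simp add: q_def field_simps)
  hence "(m * q) * (m * q) < q" using q by (simp add: algebra_simps mult_less_cancel_right2)
  hence "p < p ^ ?n + real ?n * a * q" using ge pq by linarith
  also have "\<dots> = p ^ ?n + real ?n * p ^ (?n - 1) * (1 - p)" by (simp add: a_def pq)
  also have "\<dots> \<le> nRel V E p"
    using assms(1) tc q pq by (intro nRel_ge_whole_and_vertex_deleted) auto
  finally show ?thesis .
qed

lemma isCont_nRel: "isCont (nRel V E) x"
  unfolding nRel_def by (intro continuous_intros)

lemma two_fixed_points_if_nRel_half_less:
  assumes fin: "finite V" and tc: "two_connected V E" and half: "nRel V E (1/2) < 1/2"
  shows "\<exists>p1 p2. p1 \<noteq> p2 \<and> p1 \<in> {0<..<1} \<and> p2 \<in> {0<..<1}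
           \<and> nRel V E p1 = p1 \<and> nRel V E p2 = p2"
proof -
  define g where "g p = nRel V E p - p" for p
  have cont: "isCont g x" for x unfolding g_def by (intro continuous_intros isCont_nRel)
  have n: "card V \<ge> 3" using tc by (simp add: two_connected_def)
  define a where "a = 1 / (2 * real (card V))"
  define b where "b = 1 - 1 / (2 * real (card V) ^ 2)"
  have "(1::real) < real (card V) ^ 2" using n by (simp add: power2_eq_square less_1_mult)
  hence ab: "0 < a" "a < 1/2" "1/2 < b" "b < 1" using n by (auto simp: a_def b_def field_simps)
  have "0 < g a" using nRel_gt_self_near_0[OF fin n] by (simp add: g_def a_def)
  moreover have "0 < g b" using nRel_gt_self_near_1[OF fin tc] by (simp add: g_def b_def)
  moreover have "g (1/2) < 0" using half by (simp add: g_def)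
  ultimately obtain x1 x2 where x1: "a \<le> x1" "x1 \<le> 1/2" "g x1 = 0"
    and x2: "1/2 \<le> x2" "x2 \<le> b" "g x2 = 0"
    using IVT2[of g "1/2" 0 a] IVT[of g "1/2" 0 b] ab cont by (metis less_le_not_le)
  have "x1 \<noteq> 1/2" "x2 \<noteq> 1/2" using x1(3) x2(3) \<open>g (1/2) < 0\<close> by (metis less_irrefl)+
  with x1 x2 show ?thesis
    using ab by (intro exI[of _ x1] exI[of _ x2]) (auto simp: g_def)
qed

theorem theorem4p3:
  fixes \<Delta> :: nat
  assumes "\<Delta> \<ge> 2"
  shows "\<exists>N::nat. \<forall>(V::nat set) E. simple_graph V E \<and> two_connected V E
            \<and> max_degree V E = \<Delta> \<and> card V \<ge> N \<longrightarrow>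
          (\<exists>p1 p2. p1 \<noteq> p2 \<and> p1 \<in> {0<..<1} \<and> p2 \<in> {0<..<1}
             \<and> nRel V E p1 = p1 \<and> nRel V E p2 = p2)"
proof -
  define D where "D = Suc \<Delta>"
  have "(0::real) \<le> 1 - 1/2^D" "1 - 1/2^D < (1::real)" by (auto simp: field_simps)
  then obtain M where M: "(1 - 1/2^D) ^ M < (1/4 :: real)"
    using real_arch_pow_inv[of "1/4"] by fastforce
  show ?thesis
  proof (intro exI[of _ "max 4 (D * D * M)"] allI impI, elim conjE)
    fix V :: "nat set" and E
    assume sg: "simple_graph V E" and tc: "two_connected V E"
      and "max_degree V E = \<Delta>" and large: "max 4 (D * D * M) \<le> card V"
    have fin: "finite V" using sg by (simp add: simple_graph_def)
    have nbhd_le: "\<forall>x\<in>V. card (closed_nbhd V E x) \<le> D"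
      using card_closed_nbhd_le_max_degree[OF fin, of _ E] \<open>max_degree V E = \<Delta>\<close>
      by (simp add: D_def)
    have "nRel V E (1/2) < 1/2" using sg nbhd_le M large by (rule nRel_half_less_half)
    with fin tc show "\<exists>p1 p2. p1 \<noteq> p2 \<and> p1 \<in> {0<..<1} \<and> p2 \<in> {0<..<1}
                        \<and> nRel V E p1 = p1 \<and> nRel V E p2 = p2"
      by (rule two_fixed_points_if_nRel_half_less)
  qed
qed

end
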